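(* Let $\tau\colon\mathbb R^{\mathbb Z}\to\mathbb R^{\mathbb Z}$ be defined by $\tau(x)(n)=x(n+1)-x(n)^2$ for all $x\in\mathbb R^{\mathbb Z}$ and $n\in\mathbb Z$. Then $\tau$ is an algebraic cellular automaton over $\mathbb R$ (with memory set $\{0,1\}$ and local defining map $(x_0,x_1)\mapsto x_1-x_0^2$), its image $\tau(\mathbb R^{\mathbb Z})$ is dense in $\mathbb R^{\mathbb Z}$ for the prodiscrete topology, the constant configuration $z\equiv 1$ is not in $\tau(\mathbb R^{\mathbb Z})$, and hence $\tau(\mathbb R^{\mathbb Z})$ is not closed in $\mathbb R^{\mathbb Z}$ for the prodiscrete topology.
   Context: The prodiscrete topology on $\mathbb R^{\mathbb Z}$ is the product topology where each factor $\mathbb R$ is given the discrete topology. A cellular automaton over $\mathbb Z$ with alphabet $\mathbb R$ is a map $\tau$ for which there exist a finite $M\subset\mathbb Z$ and $\mu\colon\mathbb R^M\to\mathbb R$ with $\tau(x)(n)=\mu((m\mapsto x(n+m))_{m\in M})$; it is algebraic if $\mu$ is a polynomial map. *)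

theory Defs
  imports "HOL-Analysis.Analysis"
begin

text \<open>Polynomial maps R^M -> R (M a finite set of integers), represented as functions on
  int => real that only inspect the coordinates in M: the smallest class containing
  constants and coordinate projections (m in M), closed under sum and product.\<close>
inductive_set poly_map :: "int set \<Rightarrow> ((int \<Rightarrow> real) \<Rightarrow> real) set" for M :: "int set" where
  const: "(\<lambda>y. c) \<in> poly_map M"
| proj: "m \<in> M \<Longrightarrow> (\<lambda>y. y m) \<in> poly_map M"
| add: "p \<in> poly_map M \<Longrightarrow> q \<in> poly_map M \<Longrightarrow> (\<lambda>y. p y + q y) \<in> poly_map M"
| mult: "p \<in> poly_map M \<Longrightarrow> q \<in> poly_map M \<Longrightarrow> (\<lambda>y. p y * q y) \<in> poly_map M"

definition CA_with :: "int set \<Rightarrow> ((int \<Rightarrow> 'a) \<Rightarrow> 'a) \<Rightarrow> ((int \<Rightarrow> 'a) \<Rightarrow> (int \<Rightarrow> 'a)) \<Rightarrow> bool" where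
  "CA_with M \<mu> \<tau> \<longleftrightarrow> finite M \<and> (\<forall>x n. \<tau> x n = \<mu> (\<lambda>m\<in>M. x (n + m)))"

definition cellular_automaton :: "((int \<Rightarrow> 'a) \<Rightarrow> (int \<Rightarrow> 'a)) \<Rightarrow> bool" where
  "cellular_automaton \<tau> \<longleftrightarrow> (\<exists>M \<mu>. CA_with M \<mu> \<tau>)"

definition algebraic_CA :: "((int \<Rightarrow> real) \<Rightarrow> (int \<Rightarrow> real)) \<Rightarrow> bool" where
  "algebraic_CA \<tau> \<longleftrightarrow> (\<exists>M \<mu>. CA_with M \<mu> \<tau> \<and> \<mu> \<in> poly_map M)"

definition prodiscrete :: "(int \<Rightarrow> real) topology" where
  "prodiscrete = product_topology (\<lambda>_. discrete_topology UNIV) UNIV"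

end

theory Submission
  imports Defs
begin

(* Density of the image in the prodiscrete topology rests on two general facts:
   (1) a set of configurations is dense as soon as it contains, for every configuration z and
       every finite window F, a configuration agreeing with z on F;
   (2) every automaton of the form x (n+1) - g (x n) is surjective on each half-line
       {n. n >= N}: a preimage is built by forward recursion from an arbitrary start value.
   The constant configuration 1 is not in the image: a preimage would satisfy
   x (n+1) = 1 + (x n)^2 >= x n + 3/4 and x n >= 1 for all n, but no bi-infinite sequence that
   increases by a fixed positive step can stay bounded below.  A dense set that is not the
   whole space is not closed, which gives the last claim. *)

lemma topspace_prodiscrete: "topspace prodiscrete = UNIV"
  unfolding prodiscrete_def by (simp add: PiE_def extensional_def)

text \<open>Density criterion in a product of discrete spaces: it suffices to match any
  configuration on any finite set of coordinates, since basic open sets constrain only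
  finitely many coordinates.\<close>

lemma closure_of_product_discrete_eq_topspace:
  fixes S :: "('i \<Rightarrow> 'a) set"
  assumes match: "\<And>z F. finite F \<Longrightarrow> \<exists>y\<in>S. \<forall>i\<in>F. y i = z i"
  defines "X \<equiv> product_topology (\<lambda>_::'i. discrete_topology (UNIV :: 'a set)) UNIV"
  shows "X closure_of S = topspace X"
proof -
  have "z \<in> X closure_of S" for z
  proof (subst in_closure_of, intro conjI allI impI)
    show "z \<in> topspace X"
      by (simp add: X_def PiE_def extensional_def)
  next
    fix T assume "z \<in> T \<and> openin X T"
    then obtain U where fin: "finite {i. U i \<noteq> UNIV}"
      and z_in: "z \<in> PiE UNIV U" and sub: "PiE UNIV U \<subseteq> T"
      unfolding X_def openin_product_topology_alt by auto
    obtain y where "y \<in> S" and agree: "\<forall>i\<in>{i. U i \<noteq> UNIV}. y i = z i"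
      using match[OF fin] by blast
    have "y i \<in> U i" for i
      using agree z_in by (cases "U i = UNIV") (auto simp: PiE_def)
    then have "y \<in> PiE UNIV U" by (simp add: PiE_def extensional_def)
    then show "\<exists>y. y \<in> S \<and> y \<in> T" using \<open>y \<in> S\<close> sub by blast
  qed
  then show ?thesis by (auto simp: X_def PiE_def extensional_def)
qed

text \<open>An automaton of the form x (n+1) - g (x n) hits any target configuration on
  any half-line: solve x (n+1) = z n + g (x n) forward from the left end.\<close>

lemma half_line_preimage:
  fixes \<tau> :: "(int \<Rightarrow> real) \<Rightarrow> (int \<Rightarrow> real)" and g :: "real \<Rightarrow> real"
  assumes tau: "\<And>x n. \<tau> x n = x (n + 1) - g (x n)"
  shows "\<exists>x. \<forall>n\<ge>N. \<tau> x n = z n"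
proof -
  define f where "f = rec_nat (0::real) (\<lambda>k r. z (N + int k) + g r)"
  have f_Suc: "f (Suc k) = z (N + int k) + g (f k)" for k by (simp add: f_def)
  define x where "x n = f (nat (n - N))" for n
  have "\<tau> x n = z n" if "n \<ge> N" for n
  proof -
    have "nat (n + 1 - N) = Suc (nat (n - N))" and "N + int (nat (n - N)) = n"
      using that by simp_all
    then show ?thesis by (simp add: tau x_def f_Suc)
  qed
  then show ?thesis by blast
qed

text \<open>A bi-infinite real sequence increasing by at least a fixed positive step is unbounded
  below: going back k steps from index 0 decreases the value by at least k * c.\<close>

lemma biinfinite_steps_unbounded_below:
  fixes x :: "int \<Rightarrow> real"
  assumes step: "\<And>n. x n + c \<le> x (n + 1)" and "c > 0"
  shows "\<exists>n. x n < b"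
proof -
  have climb: "x m + c * real k \<le> x (m + int k)" for m k
  proof (induction k)
    case 0 then show ?case by simp
  next
    case (Suc k)
    have "x m + c * real (Suc k) \<le> x (m + int k) + c"
      using Suc.IH by (simp add: algebra_simps)
    also have "\<dots> \<le> x (m + int (Suc k))"
      using step[of "m + int k"] by (simp add: algebra_simps)
    finally show ?case .
  qed
  obtain k :: nat where k: "real k > (x 0 - b) / c"
    using reals_Archimedean2 by blast
  have "x (- int k) + c * real k \<le> x 0" using climb[of "- int k" k] by simp
  moreover have "c * real k > x 0 - b" using k \<open>c > 0\<close> by (simp add: field_simps)
  ultimately show ?thesis by (intro exI[of _ "- int k"]) linarith
qed

text \<open>The orbit equation x (n+1) = 1 + (x n)^2 has no bi-infinite real solution:
  solutions are bounded below by 1 yet increase by at least 3/4 at each step.\<close>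

lemma no_biinfinite_orbit:
  fixes x :: "int \<Rightarrow> real"
  assumes orbit: "\<And>n. x (n + 1) = 1 + (x n)\<^sup>2"
  shows False
proof -
  have ge1: "1 \<le> x n" for n using orbit[of "n - 1"] by simp
  have "x n + 3/4 \<le> x (n + 1)" for n
  proof -
    have "0 \<le> (x n - 1/2)\<^sup>2" by simp
    then show ?thesis using orbit[of n] by (simp add: power2_eq_square algebra_simps)
  qed
  then obtain n where "x n < 1"
    using biinfinite_steps_unbounded_below[of x "3/4" 1] by auto
  then show False using ge1[of n] by simp
qed

lemma local_rule_polynomial: "(\<lambda>y::int \<Rightarrow> real. y 1 - (y 0)\<^sup>2) \<in> poly_map {0, 1}"
proof -
  have "(\<lambda>y::int \<Rightarrow> real. y 1 + (\<lambda>_. -1) y * (y 0 * y 0)) \<in> poly_map {0, 1}"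
    by (intro poly_map.add poly_map.mult poly_map.const poly_map.proj) auto
  then show ?thesis by (simp add: power2_eq_square)
qed

theorem mainTheorem11:
  fixes \<tau> :: "(int \<Rightarrow> real) \<Rightarrow> (int \<Rightarrow> real)"
  assumes tau_def: "\<And>x n. \<tau> x n = x (n + 1) - (x n)\<^sup>2"
  shows "cellular_automaton \<tau> \<and> algebraic_CA \<tau>
    \<and> CA_with {0, 1} (\<lambda>y. y 1 - (y 0)\<^sup>2) \<tau>
    \<and> (\<lambda>y. y 1 - (y 0)\<^sup>2) \<in> poly_map {0, 1}
    \<and> prodiscrete closure_of (range \<tau>) = topspace prodiscrete
    \<and> (\<lambda>_. 1) \<notin> range \<tau>
    \<and> \<not> closedin prodiscrete (range \<tau>)"
proof -
  have CA: "CA_with {0, 1} (\<lambda>y. y 1 - (y 0)\<^sup>2) \<tau>"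
    unfolding CA_with_def by (simp add: tau_def add.commute)
  have dense: "prodiscrete closure_of (range \<tau>) = topspace prodiscrete"
    unfolding prodiscrete_def
  proof (rule closure_of_product_discrete_eq_topspace)
    fix z :: "int \<Rightarrow> real" and F :: "int set" assume "finite F"
    then obtain N where "\<forall>i\<in>F. N \<le> i" using bdd_below_finite by (auto simp: bdd_below_def)
    moreover obtain x where "\<forall>n\<ge>N. \<tau> x n = z n"
      using half_line_preimage[of \<tau> "\<lambda>r. r\<^sup>2"] tau_def by blast
    ultimately show "\<exists>y\<in>range \<tau>. \<forall>i\<in>F. y i = z i" by blast
  qed
  have not_one: "(\<lambda>_. 1) \<notin> range \<tau>"
  proof
    assume "(\<lambda>_. 1) \<in> range \<tau>"
    then obtain x where "\<tau> x = (\<lambda>_. 1)" by auto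
    then have "x (n + 1) = 1 + (x n)\<^sup>2" for n
      using tau_def[of x n] by (simp add: fun_eq_iff)
    then show False using no_biinfinite_orbit by blast
  qed
  have "\<not> closedin prodiscrete (range \<tau>)"
    using dense not_one closure_of_eq topspace_prodiscrete by (metis UNIV_I)
  then show ?thesis using CA dense not_one local_rule_polynomial
    unfolding cellular_automaton_def algebraic_CA_def by blast
qed

end
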